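(* Let $X$ and $Y$ be linear spaces and let $f:X\to Y$ be a mapping. Then $f$ is additive, i.e. $f(x+y)=f(x)+f(y)$ for all $x,y\in X$, if and only if $$3f(x+3y)-f(3x+y)=12[f(x+y)+f(x-y)]-24f(x)+8f(y)$$ for all $x,y\in X$. *)

theory Defs
  imports Complex_Main
begin

end

theory Submission
  imports Defs
begin

text \<open>
  Additivity gives the equation by direct expansion. Conversely, the substitutions
  \<open>x = y = 0\<close>, \<open>y = 0\<close> and \<open>x = 0\<close> show that a solution vanishes at \<open>0\<close>, commutes
  with scaling by \<open>3\<close> and is odd. Combining the equation with its instance for swapped
  arguments eliminates \<open>f (3x + y)\<close> and leaves
  \<open>f (x + 3y) = 6 f (x + y) + 3 f (x - y) - 8 f x\<close>, which at \<open>y = -x\<close> yields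
  \<open>f (2x) = 2 f x\<close>. Two further instances of this identity, at
  \<open>(-(a+b), b-a)\<close> and \<open>(b-2a, 2a+b)\<close>, then solve for \<open>f (a + b)\<close>.
\<close>

text \<open>Unfolding numeral scalars into sums lets \<open>algebra_simps\<close> decide identities
  between integer combinations of vectors.\<close>

lemma scaleR_numeral_Bit0:
  "(numeral (Num.Bit0 n) :: real) *\<^sub>R v = numeral n *\<^sub>R v + numeral n *\<^sub>R (v :: 'a::real_vector)"
  by (simp only: numeral_Bit0 scaleR_add_left)

lemma scaleR_numeral_Bit1:
  "(numeral (Num.Bit1 n) :: real) *\<^sub>R v = numeral n *\<^sub>R v + numeral n *\<^sub>R v + (v :: 'a::real_vector)"
  by (simp only: numeral_Bit1 scaleR_add_left scaleR_one)

lemmas scaleR_numeral_unfold = scaleR_numeral_Bit0 scaleR_numeral_Bit1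

lemma scaleR_3_eq_add: "(3 :: real) *\<^sub>R v = v + v + (v :: 'a::real_vector)"
  by (simp add: scaleR_numeral_unfold)

lemma additive_scaleR_3:
  fixes f :: "'a::real_vector \<Rightarrow> 'b::real_vector"
  assumes "additive f"
  shows "f (3 *\<^sub>R x) = 3 *\<^sub>R f x"
proof -
  interpret additive f by fact
  have "f (3 *\<^sub>R x) = f x + f x + f x"
    by (simp only: scaleR_3_eq_add add)
  also have "\<dots> = 3 *\<^sub>R f x"
    by (simp only: scaleR_3_eq_add)
  finally show ?thesis .
qed

lemma additive_functional_equation:
  fixes f :: "'a::real_vector \<Rightarrow> 'b::real_vector"
  assumes "additive f"
  shows "3 *\<^sub>R f (x + 3 *\<^sub>R y) - f (3 *\<^sub>R x + y)
       = 12 *\<^sub>R (f (x + y) + f (x - y)) - 24 *\<^sub>R f x + 8 *\<^sub>R f y"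
proof -
  interpret additive f by fact
  show ?thesis
    using additive_scaleR_3[OF assms] by (simp add: add diff algebra_simps scaleR_numeral_unfold)
qed

locale functional_equation_solution =
  fixes f :: "'a::real_vector \<Rightarrow> 'b::real_vector"
  assumes equation: "3 *\<^sub>R f (x + 3 *\<^sub>R y) - f (3 *\<^sub>R x + y)
       = 12 *\<^sub>R (f (x + y) + f (x - y)) - 24 *\<^sub>R f x + 8 *\<^sub>R f y"
begin

lemma zero: "f 0 = 0"
proof -
  have "6 *\<^sub>R f 0 = (12 *\<^sub>R (f 0 + f 0) - 24 *\<^sub>R f 0 + 8 *\<^sub>R f 0) - (3 *\<^sub>R f 0 - f 0)"
    by (simp add: algebra_simps scaleR_numeral_unfold)
  also have "\<dots> = 0"
    using equation[of 0 0] by simp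
  finally show ?thesis by simp
qed

lemma scaleR_3: "f (3 *\<^sub>R x) = 3 *\<^sub>R f x"
proof -
  have "3 *\<^sub>R f x - f (3 *\<^sub>R x) = 12 *\<^sub>R (f x + f x) - 24 *\<^sub>R f x"
    using equation[of x 0] by (simp add: zero)
  also have "\<dots> = 0"
    by (simp add: algebra_simps scaleR_numeral_unfold)
  finally show ?thesis by simp
qed

lemma minus: "f (- x) = - f x"
proof -
  have "12 *\<^sub>R (f x + f (- x)) = 3 *\<^sub>R (3 *\<^sub>R f x) - f x - 8 *\<^sub>R f x"
    using equation[of 0 x] by (simp add: zero scaleR_3 algebra_simps)
  also have "\<dots> = 0"
    by (simp add: algebra_simps scaleR_numeral_unfold)
  finally show ?thesis by (simp add: eq_neg_iff_add_eq_0 add.commute)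
qed

lemma add_scaleR_3: "f (x + 3 *\<^sub>R y) = 6 *\<^sub>R f (x + y) + 3 *\<^sub>R f (x - y) - 8 *\<^sub>R f x"
proof -
  have swapped: "3 *\<^sub>R f (3 *\<^sub>R x + y) - f (x + 3 *\<^sub>R y)
       = 12 *\<^sub>R (f (x + y) - f (x - y)) - 24 *\<^sub>R f y + 8 *\<^sub>R f x"
    using equation[of y x] minus[of "x - y"] by (simp add: add.commute)
  have "8 *\<^sub>R f (x + 3 *\<^sub>R y) = 3 *\<^sub>R (3 *\<^sub>R f (x + 3 *\<^sub>R y) - f (3 *\<^sub>R x + y))
      + (3 *\<^sub>R f (3 *\<^sub>R x + y) - f (x + 3 *\<^sub>R y))"
    by (simp add: algebra_simps scaleR_numeral_unfold)
  also have "\<dots> = 8 *\<^sub>R (6 *\<^sub>R f (x + y) + 3 *\<^sub>R f (x - y) - 8 *\<^sub>R f x)"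
    unfolding equation swapped by (simp add: algebra_simps scaleR_numeral_unfold)
  finally show ?thesis by simp
qed

lemma scaleR_2: "f (2 *\<^sub>R x) = 2 *\<^sub>R f x"
proof -
  have "x + 3 *\<^sub>R (- x) = - (2 *\<^sub>R x)" "x - - x = 2 *\<^sub>R x"
    by (simp_all add: algebra_simps scaleR_numeral_unfold)
  then have shifted: "- f (2 *\<^sub>R x) = 3 *\<^sub>R f (2 *\<^sub>R x) - 8 *\<^sub>R f x"
    using add_scaleR_3[of x "- x"] by (simp add: zero minus)
  have "4 *\<^sub>R f (2 *\<^sub>R x) = 3 *\<^sub>R f (2 *\<^sub>R x) - - f (2 *\<^sub>R x)"
    by (simp add: algebra_simps scaleR_numeral_unfold)
  also have "\<dots> = 4 *\<^sub>R (2 *\<^sub>R f x)"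
    unfolding shifted by (simp add: algebra_simps)
  finally show ?thesis by (simp del: scaleR_scaleR)
qed

lemma scaleR_4: "f (4 *\<^sub>R x) = 4 *\<^sub>R f x"
  using scaleR_2[of "2 *\<^sub>R x"] scaleR_2[of x] by simp

lemma add: "f (a + b) = f a + f b"
proof -
  have "- (a + b) + 3 *\<^sub>R (b - a) = - (2 *\<^sub>R (2 *\<^sub>R a - b))"
    "- (a + b) + (b - a) = - (2 *\<^sub>R a)" "- (a + b) - (b - a) = - (2 *\<^sub>R b)"
    by (simp_all add: algebra_simps scaleR_numeral_unfold)
  then have "- (2 *\<^sub>R f (2 *\<^sub>R a - b))
      = - (12 *\<^sub>R f a) - 6 *\<^sub>R f b + 8 *\<^sub>R f (a + b)"
    using add_scaleR_3[of "- (a + b)" "b - a"] minus[of "a + b"] by (simp add: minus scaleR_2)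
  then have "2 *\<^sub>R f (2 *\<^sub>R a - b) = 2 *\<^sub>R (6 *\<^sub>R f a + 3 *\<^sub>R f b - 4 *\<^sub>R f (a + b))"
    by (simp add: algebra_simps)
  then have diff_scaleR_2: "f (2 *\<^sub>R a - b) = 6 *\<^sub>R f a + 3 *\<^sub>R f b - 4 *\<^sub>R f (a + b)"
    by simp
  have "- (2 *\<^sub>R a - b) + 3 *\<^sub>R (2 *\<^sub>R a + b) = 4 *\<^sub>R (a + b)"
    "- (2 *\<^sub>R a - b) + (2 *\<^sub>R a + b) = 2 *\<^sub>R b"
    "- (2 *\<^sub>R a - b) - (2 *\<^sub>R a + b) = - (4 *\<^sub>R a)"
    by (simp_all add: algebra_simps scaleR_numeral_unfold)
  then have "f (4 *\<^sub>R (a + b))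
      = 6 *\<^sub>R f (2 *\<^sub>R b) + 3 *\<^sub>R f (- (4 *\<^sub>R a)) - 8 *\<^sub>R f (- (2 *\<^sub>R a - b))"
    using add_scaleR_3[of "- (2 *\<^sub>R a - b)" "2 *\<^sub>R a + b"] by (simp only:)
  then have "4 *\<^sub>R f (a + b) = 4 *\<^sub>R (3 *\<^sub>R f b - 3 *\<^sub>R f a + 2 *\<^sub>R f (2 *\<^sub>R a - b))"
    unfolding minus scaleR_2 scaleR_4 by (simp add: algebra_simps)
  then have add_eq: "f (a + b) = 3 *\<^sub>R f b - 3 *\<^sub>R f a + 2 *\<^sub>R f (2 *\<^sub>R a - b)"
    by simp
  have "9 *\<^sub>R f (a + b) = f (a + b) + 8 *\<^sub>R f (a + b)"
    by (simp add: algebra_simps scaleR_numeral_unfold)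
  also have "\<dots> = 9 *\<^sub>R (f a + f b)"
    by (subst (1) add_eq, unfold diff_scaleR_2) (simp add: algebra_simps scaleR_numeral_unfold)
  finally show ?thesis by simp
qed

end

theorem lemma2p1:
  fixes f :: "'a::real_vector \<Rightarrow> 'b::real_vector"
  shows "(\<forall>x y. f (x + y) = f x + f y) \<longleftrightarrow>
    (\<forall>x y. 3 *\<^sub>R f (x + 3 *\<^sub>R y) - f (3 *\<^sub>R x + y)
       = 12 *\<^sub>R (f (x + y) + f (x - y)) - 24 *\<^sub>R f x + 8 *\<^sub>R f y)"
proof
  assume "\<forall>x y. f (x + y) = f x + f y"
  then have "additive f" by (simp add: additive_def)
  then show "\<forall>x y. 3 *\<^sub>R f (x + 3 *\<^sub>R y) - f (3 *\<^sub>R x + y)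
       = 12 *\<^sub>R (f (x + y) + f (x - y)) - 24 *\<^sub>R f x + 8 *\<^sub>R f y"
    by (blast intro: additive_functional_equation)
next
  assume "\<forall>x y. 3 *\<^sub>R f (x + 3 *\<^sub>R y) - f (3 *\<^sub>R x + y)
       = 12 *\<^sub>R (f (x + y) + f (x - y)) - 24 *\<^sub>R f x + 8 *\<^sub>R f y"
  then interpret functional_equation_solution f by unfold_locales blast
  show "\<forall>x y. f (x + y) = f x + f y" using add by blast
qed

end
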